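(* Let $(\lambda_1,v)$ be a real eigenpair of the $n\times n$ real matrix $A=[a_{ij}]$, with every component of $v$ nonzero. Let $S=\mathrm{diag}(v)$ and $B=[b_{ij}]=S^{-1}AS$. If $\lambda$ is an eigenvalue of $A$ different from $\lambda_1$, then $$|\lambda|\le\max_{1\le i\le n}\{|a_{ii}|+\hat r_i(B)\}.$$ Moreover: (1) If $n$ is even and $F=[f_{ij}]=[b_{ij}-\beta_j]$, where $\beta_j$ is the $(n/2)$-th largest element among $b_{1j},\dots,b_{j-1,j},b_{j+1,j},\dots,b_{nj}$, then $|\lambda|\le\max_{1\le i\le n}\{|f_{ii}|+\hat r_i(F)\}$. (2) If $n$ is odd with $n\ge 3$, and $F=[f_{ij}]=[b_{ij}+\beta_j]$, $G=[g_{ij}]=[b_{ij}+\gamma_j]$, where $\beta_j$ and $\gamma_j$ are, respectively, the negatives of the $\frac{n-1}{2}$-th and the $\frac{n+1}{2}$-th largest numbers among $b_{1j},\dots,b_{j-1,j},b_{j+1,j},\dots,b_{nj}$, then $$|\lambda|\le\min\Big\{\max_{1\le i\le n}\{|f_{ii}|+\hat r_i(F)\},\ \max_{1\le i\le n}\{|g_{ii}|+\hat r_i(G)\}\Big\}.$$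
   Context: For a real $n\times n$ matrix $M=[m_{ij}]$ and index $i$, let $y_1\ge\dots\ge y_n$ be the non-increasing rearrangement of the $i$-th column of $M$ with its diagonal entry replaced by $0$, i.e. of $m_{1i},\dots,m_{i-1,i},0,m_{i+1,i},\dots,m_{ni}$. Define $\hat r_i(M)=\sum_{t=1}^{(n-1)/2}y_t-\sum_{t=(n+3)/2}^{n}y_t$ if $n$ is odd and $\hat r_i(M)=\sum_{t=1}^{n/2}y_t-\sum_{t=n/2+1}^{n}y_t$ if $n$ is even (the radius of the Gershgorin disc of the second type obtained from the $i$-th column of $M$). "The $t$-th largest element" of a list refers to the $t$-th entry of the list sorted in non-increasing order (with repetitions). *)

theory Defs
  imports Complex_Main "Jordan_Normal_Form.Char_Poly"
begin

(* Indices are 0-based: i, j range over {0..<n}. *)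

definition col_sorted_desc :: "real mat \<Rightarrow> nat \<Rightarrow> real list" where
  "col_sorted_desc M i =
     rev (sort (map (\<lambda>j. if j = i then 0 else M $$ (j, i)) [0..<dim_row M]))"

definition rhat :: "real mat \<Rightarrow> nat \<Rightarrow> real" where
  "rhat M i = (let n = dim_row M; ys = col_sorted_desc M i in
     if even n then sum_list (take (n div 2) ys) - sum_list (drop (n div 2) ys)
     else sum_list (take ((n - 1) div 2) ys) - sum_list (drop ((n + 1) div 2) ys))"

definition kth_largest :: "nat \<Rightarrow> real list \<Rightarrow> real" where
  "kth_largest k xs = rev (sort xs) ! (k - 1)"

definition offdiag_col :: "real mat \<Rightarrow> nat \<Rightarrow> real list" where
  "offdiag_col M j = map (\<lambda>i. M $$ (i, j)) (filter (\<lambda>i. i \<noteq> j) [0..<dim_row M])"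

definition gersh_bound :: "real mat \<Rightarrow> real" where
  "gersh_bound M = Max ((\<lambda>i. \<bar>M $$ (i, i)\<bar> + rhat M i) ` {..<dim_row M})"

end

theory Submission
  imports Defs
begin

text \<open>
  Let \<open>x\<close> be a left eigenvector of \<open>A\<close> for \<open>\<lambda>\<close>. Since \<open>\<lambda> \<noteq> \<lambda>\<^sub>1\<close>, \<open>x\<close> is orthogonal to the
  right eigenvector \<open>v\<close>, so \<open>y = (x\<^sub>j v\<^sub>j)\<^sub>j\<close> is a left eigenvector of \<open>B = S\<^sup>-\<^sup>1 A S\<close> whose
  entries sum to zero. Hence adding an arbitrary constant \<open>c\<^sub>j\<close> to each column \<open>j\<close> of \<open>B\<close>
  keeps \<open>y\<close> a left eigenvector; in particular the column medians may be subtracted.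
  Reading the eigen-equation off at an index \<open>i\<close> where \<open>|y\<^sub>i|\<close> is maximal bounds \<open>|\<lambda>|\<close> by
  the diagonal entry plus \<open>\<Sum>\<^sub>j |z\<^sub>j - t|\<close> for any \<open>t\<close>, where \<open>z\<close> is the \<open>i\<close>-th column with
  zero diagonal; for \<open>t\<close> a median of \<open>z\<close> this sum is exactly \<open>r\<^sub>i(M)\<close>.
  The choices of \<open>\<beta>\<^sub>j\<close> and \<open>\<gamma>\<^sub>j\<close> in the theorem are therefore irrelevant for its validity.
\<close>

lemma sum_list_abs_diff_sorted_desc:
  fixes ys :: "real list"
  assumes sorted: "sorted_wrt (\<ge>) ys" and k: "k < length ys"
  shows "sum_list (map (\<lambda>x. \<bar>x - ys ! k\<bar>) ys)
    = sum_list (take k ys) - sum_list (drop k ys) + (real (length ys) - 2 * real k) * ys ! k"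
proof -
  let ?t = "ys ! k"
  have above: "x \<ge> ?t" if "x \<in> set (take k ys)" for x
    using that sorted k by (auto simp: in_set_conv_nth dest: sorted_wrt_nth_less)
  have below: "x \<le> ?t" if "x \<in> set (drop k ys)" for x
  proof -
    from that obtain j where "j < length ys - k" "x = ys ! (k + j)"
      using k by (auto simp: in_set_conv_nth)
    then show ?thesis
      using sorted_wrt_nth_less[OF sorted, of k "k + j"] by (cases "j = 0") auto
  qed
  have "sum_list (map (\<lambda>x. \<bar>x - ?t\<bar>) ys) = sum_list (map (\<lambda>x. \<bar>x - ?t\<bar>) (take k ys))
     + sum_list (map (\<lambda>x. \<bar>x - ?t\<bar>) (drop k ys))"
    by (metis append_take_drop_id map_append sum_list_append)
  also have "\<dots> = sum_list (map (\<lambda>x. x - ?t) (take k ys)) + sum_list (map (\<lambda>x. ?t - x) (drop k ys))"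
    using above below by (simp cong: map_cong)
  also have "\<dots> = (sum_list (take k ys) - real k * ?t) + (real (length ys - k) * ?t - sum_list (drop k ys))"
    using k by (simp add: sum_list_subtractf sum_list_triv)
  finally show ?thesis
    using k by (simp add: algebra_simps)
qed

lemma rhat_eq_sum_abs_diff_median:
  assumes "dim_row M = n" "i < n"
  shows "rhat M i = (\<Sum>j<n. \<bar>(if j = i then 0 else M $$ (j, i)) - col_sorted_desc M i ! (n div 2)\<bar>)"
proof -
  define zs where "zs = map (\<lambda>j. if j = i then 0 else M $$ (j, i)) [0..<n]"
  define ys where "ys = col_sorted_desc M i"
  have ys: "ys = rev (sort zs)"
    unfolding ys_def zs_def col_sorted_desc_def using assms by simp
  have len: "length ys = n"
    using ys zs_def by simp
  have sorted: "sorted_wrt (\<ge>) ys"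
    unfolding ys sorted_wrt_rev by (metis sorted_sort)
  have mset_eq: "mset ys = mset zs"
    using ys by simp
  let ?t = "ys ! (n div 2)"
  have "(\<Sum>j<n. \<bar>(if j = i then 0 else M $$ (j, i)) - ?t\<bar>) = sum_list (map (\<lambda>x. \<bar>x - ?t\<bar>) zs)"
    unfolding zs_def by (simp add: sum_list_sum_nth atLeast0LessThan)
  also have "\<dots> = sum_list (map (\<lambda>x. \<bar>x - ?t\<bar>) ys)"
    by (metis mset_eq mset_map sum_mset_sum_list)
  also have "\<dots> = sum_list (take (n div 2) ys) - sum_list (drop (n div 2) ys)
      + (real n - 2 * real (n div 2)) * ?t"
    using sum_list_abs_diff_sorted_desc[OF sorted, of "n div 2"] len assms by simp
  finally have sum_eq: "(\<Sum>j<n. \<bar>(if j = i then 0 else M $$ (j, i)) - ?t\<bar>) = \<dots>" .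
  show ?thesis
  proof (cases "even n")
    case True
    then have "real n - 2 * real (n div 2) = 0"
      by (metis dvd_mult_div_cancel of_nat_mult of_nat_numeral diff_self)
    then show ?thesis
      using sum_eq True unfolding rhat_def ys_def[symmetric] assms(1) by simp
  next
    case False
    then have n_odd: "n = 2 * (n div 2) + 1"
      by presburger
    then have "real n = 2 * real (n div 2) + 1"
      by (subst n_odd) simp
    then have "real n - 2 * real (n div 2) = 1" "(n - 1) div 2 = n div 2"
        "(n + 1) div 2 = Suc (n div 2)"
      using n_odd by simp_all
    moreover have "drop (n div 2) ys = ?t # drop (Suc (n div 2)) ys"
      using len assms by (simp add: Cons_nth_drop_Suc)
    ultimately show ?thesis
      using sum_eq False unfolding rhat_def ys_def[symmetric] assms(1) by simp
  qed
qed

lemma norm_left_eigenvalue_le_diag_plus_rhat: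
  fixes M :: "real mat" and y :: "nat \<Rightarrow> complex"
  assumes dim: "dim_row M = n" and i: "i < n"
    and zero_sum: "(\<Sum>j<n. y j) = 0"
    and max: "\<forall>j<n. cmod (y j) \<le> cmod (y i)" and nz: "y i \<noteq> 0"
    and left: "(\<Sum>j<n. y j * of_real (M $$ (j, i))) = lam * y i"
  shows "cmod lam \<le> \<bar>M $$ (i, i)\<bar> + rhat M i"
proof -
  define z where "z j = (if j = i then 0 else M $$ (j, i))" for j
  define t where "t = col_sorted_desc M i ! (n div 2)"
  have rhat_eq: "rhat M i = (\<Sum>j<n. \<bar>z j - t\<bar>)"
    unfolding z_def t_def by (rule rhat_eq_sum_abs_diff_median[OF dim i])
  have "lam * y i = y i * of_real (M $$ (i, i)) + (\<Sum>j<n. y j * of_real (z j))"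
    using i left by (simp add: sum.remove[of _ i] z_def if_distrib sum.If_cases Diff_eq)
  also have "(\<Sum>j<n. y j * of_real (z j)) = (\<Sum>j<n. y j * of_real (z j - t))"
    \<comment> \<open>the shift by \<open>t\<close> costs nothing because the entries of \<open>y\<close> sum to zero\<close>
    using zero_sum by (simp add: algebra_simps sum_subtractf flip: sum_distrib_left)
  finally have eq: "lam * y i = y i * of_real (M $$ (i, i)) + (\<Sum>j<n. y j * of_real (z j - t))" .
  have "cmod (\<Sum>j<n. y j * of_real (z j - t)) \<le> (\<Sum>j<n. cmod (y j) * \<bar>z j - t\<bar>)"
    by (rule order_trans[OF norm_sum]) (simp add: norm_mult del: of_real_diff)
  also have "\<dots> \<le> (\<Sum>j<n. cmod (y i) * \<bar>z j - t\<bar>)"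
    using max by (intro sum_mono mult_right_mono) auto
  finally have off_diag: "cmod (\<Sum>j<n. y j * of_real (z j - t)) \<le> cmod (y i) * rhat M i"
    by (simp add: rhat_eq sum_distrib_left)
  have "cmod (y i) * cmod lam = cmod (lam * y i)"
    by (simp add: norm_mult)
  also have "\<dots> \<le> cmod (y i * of_real (M $$ (i, i))) + cmod (\<Sum>j<n. y j * of_real (z j - t))"
    unfolding eq by (rule norm_triangle_ineq)
  also have "\<dots> \<le> cmod (y i) * (\<bar>M $$ (i, i)\<bar> + rhat M i)"
    using off_diag by (simp add: norm_mult algebra_simps)
  finally show ?thesis
    using nz by simp
qed

lemma gersh_bound_ge_norm_left_eigenvalue:
  fixes M :: "real mat" and y :: "nat \<Rightarrow> complex"
  assumes dim: "dim_row M = n" and zero_sum: "(\<Sum>j<n. y j) = 0" and nz: "\<exists>j<n. y j \<noteq> 0"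
    and left: "\<forall>k<n. (\<Sum>j<n. y j * of_real (M $$ (j, k))) = lam * y k"
  shows "cmod lam \<le> gersh_bound M"
proof -
  have "{..<n} \<noteq> {}"
    using nz by auto
  then obtain i where i: "i < n" and i_max: "Max ((\<lambda>j. cmod (y j)) ` {..<n}) = cmod (y i)"
    by (metis obtains_MAX finite_lessThan lessThan_iff)
  have max: "\<forall>j<n. cmod (y j) \<le> cmod (y i)"
    unfolding i_max[symmetric] by simp
  have "y i \<noteq> 0"
    using nz max by force
  then have "cmod lam \<le> \<bar>M $$ (i, i)\<bar> + rhat M i"
    using norm_left_eigenvalue_le_diag_plus_rhat[OF dim i zero_sum max] left i by blast
  also have "\<dots> \<le> gersh_bound M"
    unfolding gersh_bound_def using i dim by (intro Max_ge) auto
  finally show ?thesis .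
qed

lemma left_eigen_add_column_constants:
  fixes M :: "real mat" and y :: "nat \<Rightarrow> complex" and c :: "nat \<Rightarrow> real"
  assumes zero_sum: "(\<Sum>j<n. y j) = 0" and k: "k < n"
    and left: "(\<Sum>j<n. y j * of_real (M $$ (j, k))) = lam * y k"
  shows "(\<Sum>j<n. y j * of_real (mat n n (\<lambda>(i, j). M $$ (i, j) + c j) $$ (j, k))) = lam * y k"
proof -
  have "(\<Sum>j<n. y j * of_real (mat n n (\<lambda>(i, j). M $$ (i, j) + c j) $$ (j, k)))
     = (\<Sum>j<n. y j * of_real (M $$ (j, k))) + (\<Sum>j<n. y j) * of_real (c k)"
    using k by (simp add: sum.distrib sum_distrib_left sum_distrib_right algebra_simps)
  then show ?thesis
    using zero_sum left by simp
qed

lemma eigenvectorD: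
  fixes A :: "'a :: comm_ring_1 mat"
  assumes A: "A \<in> carrier_mat n n" and eig: "eigenvector A v mu"
  shows "\<exists>j<n. v $ j \<noteq> 0" and "\<forall>j<n. (\<Sum>k<n. A $$ (j, k) * v $ k) = mu * v $ j"
proof -
  have v: "v \<in> carrier_vec n" "v \<noteq> 0\<^sub>v n" and v_eq: "A *\<^sub>v v = mu \<cdot>\<^sub>v v"
    using eig A unfolding eigenvector_def by auto
  then show "\<exists>j<n. v $ j \<noteq> 0"
    by auto
  show "\<forall>j<n. (\<Sum>k<n. A $$ (j, k) * v $ k) = mu * v $ j"
  proof (intro allI impI)
    fix j
    assume "j < n"
    then show "(\<Sum>k<n. A $$ (j, k) * v $ k) = mu * v $ j"
      using arg_cong[OF v_eq, of "\<lambda>w. w $ j"] A v by (simp add: scalar_prod_def atLeast0LessThan)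
  qed
qed

lemma eigenvalue_imp_left_eigenvector:
  fixes A :: "'a :: field mat"
  assumes A: "A \<in> carrier_mat n n" and eig: "eigenvalue A lam"
  obtains x :: "nat \<Rightarrow> 'a" where "\<exists>j<n. x j \<noteq> 0"
    and "\<forall>j<n. (\<Sum>k<n. x k * A $$ (k, j)) = lam * x j"
proof -
  have AT: "transpose_mat A \<in> carrier_mat n n"
    using A by simp
  have "eigenvalue (transpose_mat A) lam"
    using eig A unfolding eigenvalue_root_char_poly[OF A] eigenvalue_root_char_poly[OF AT] by simp
  then obtain x where "eigenvector (transpose_mat A) x lam"
    unfolding eigenvalue_def by blast
  from eigenvectorD[OF AT this] A show thesis
    by (intro that[of "\<lambda>j. x $ j"]) (auto simp: mult.commute)
qed

lemma left_right_eigenvectors_orthogonal: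
  fixes A :: "'a :: idom mat"
  assumes left: "\<forall>j<n. (\<Sum>k<n. x k * A $$ (k, j)) = lam * x j"
    and right: "\<forall>k<n. (\<Sum>j<n. A $$ (k, j) * v j) = mu * v k"
    and ne: "lam \<noteq> mu"
  shows "(\<Sum>j<n. x j * v j) = 0"
proof -
  have "lam * (\<Sum>j<n. x j * v j) = (\<Sum>j<n. (\<Sum>k<n. x k * A $$ (k, j)) * v j)"
    using left by (simp add: sum_distrib_left mult.assoc)
  also have "\<dots> = (\<Sum>k<n. x k * (\<Sum>j<n. A $$ (k, j) * v j))"
    unfolding sum_distrib_left sum_distrib_right by (subst sum.swap) (simp add: mult.assoc)
  also have "\<dots> = mu * (\<Sum>j<n. x j * v j)"
    using right by (simp add: sum_distrib_left mult_ac)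
  finally have "(lam - mu) * (\<Sum>j<n. x j * v j) = 0"
    by (simp add: algebra_simps)
  then show ?thesis
    using ne by simp
qed

lemma left_eigenvector_diag_similarity:
  fixes A :: "'a :: field mat"
  assumes left: "\<forall>j<n. (\<Sum>k<n. x k * A $$ (k, j)) = lam * x j"
    and v_nz: "\<forall>j<n. v j \<noteq> 0" and j: "j < n"
  shows "(\<Sum>k<n. (x k * v k) * mat n n (\<lambda>(i, j). 1 / v i * A $$ (i, j) * v j) $$ (k, j))
    = lam * (x j * v j)"
proof -
  have "(\<Sum>k<n. (x k * v k) * mat n n (\<lambda>(i, j). 1 / v i * A $$ (i, j) * v j) $$ (k, j))
      = (\<Sum>k<n. x k * A $$ (k, j)) * v j"
    using v_nz j by (simp add: sum_distrib_right mult.assoc)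
  then show ?thesis
    using left j by (simp add: mult.assoc)
qed

theorem theorem8:
  fixes A :: "real mat" and n :: nat and v :: "real vec" and lam1 :: real and lam :: complex
    and B :: "real mat"
  assumes A: "A \<in> carrier_mat n n"
    and eig1: "eigenvector A v lam1"
    and vnz: "\<forall>i<n. v $ i \<noteq> 0"
    and B_def: "B = mat n n (\<lambda>(i, j). (1 / v $ i) * A $$ (i, j) * v $ j)"
    and eig: "eigenvalue (map_mat complex_of_real A) lam"
    and ne: "lam \<noteq> complex_of_real lam1"
  shows "cmod lam \<le> Max ((\<lambda>i. \<bar>A $$ (i, i)\<bar> + rhat B i) ` {..<n})
    \<and> (even n \<longrightarrow>
           cmod lam \<le> gersh_bound
             (mat n n (\<lambda>(i, j). B $$ (i, j) - kth_largest (n div 2) (offdiag_col B j))))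
    \<and> (odd n \<and> n \<ge> 3 \<longrightarrow>
           cmod lam \<le> min
             (gersh_bound (mat n n (\<lambda>(i, j). B $$ (i, j)
                 + (- kth_largest ((n - 1) div 2) (offdiag_col B j)))))
             (gersh_bound (mat n n (\<lambda>(i, j). B $$ (i, j)
                 + (- kth_largest ((n + 1) div 2) (offdiag_col B j))))))"
proof -
  let ?A = "map_mat complex_of_real A" and ?v = "\<lambda>j. complex_of_real (v $ j)"
  obtain x where x_nz: "\<exists>j<n. x j \<noteq> 0" and x_left: "\<forall>j<n. (\<Sum>k<n. x k * ?A $$ (k, j)) = lam * x j"
    using eigenvalue_imp_left_eigenvector[OF _ eig] A by auto
  have v_right: "\<forall>k<n. (\<Sum>j<n. ?A $$ (k, j) * ?v j) = of_real lam1 * ?v k"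
    using eigenvectorD(2)[OF A eig1] A by (auto simp flip: of_real_mult of_real_sum)
  define y where "y j = x j * ?v j" for j
  have zero_sum: "(\<Sum>j<n. y j) = 0"
    unfolding y_def by (rule left_right_eigenvectors_orthogonal[OF x_left v_right ne])
  have y_nz: "\<exists>j<n. y j \<noteq> 0"
    using x_nz vnz by (auto simp: y_def)
  have y_left: "\<forall>k<n. (\<Sum>j<n. y j * of_real (B $$ (j, k))) = lam * y k"
    using left_eigenvector_diag_similarity[OF x_left, of ?v] vnz A
    by (auto simp: y_def B_def)
  have shifted_bound: "cmod lam \<le> gersh_bound (mat n n (\<lambda>(i, j). B $$ (i, j) + c j))" for c
    using zero_sum y_nz y_left left_eigen_add_column_constants[OF zero_sum]
    by (intro gersh_bound_ge_norm_left_eigenvalue) auto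
  have "mat n n (\<lambda>(i, j). B $$ (i, j) + 0) = B"
    by (auto simp: B_def)
  moreover have "gersh_bound B = Max ((\<lambda>i. \<bar>A $$ (i, i)\<bar> + rhat B i) ` {..<n})"
    unfolding gersh_bound_def using vnz by (auto simp: B_def intro!: arg_cong[of _ _ Max] image_cong)
  ultimately have "cmod lam \<le> Max ((\<lambda>i. \<bar>A $$ (i, i)\<bar> + rhat B i) ` {..<n})"
    using shifted_bound[of "\<lambda>_. 0"] by simp
  moreover have "cmod lam \<le> gersh_bound
      (mat n n (\<lambda>(i, j). B $$ (i, j) - kth_largest (n div 2) (offdiag_col B j)))"
    using shifted_bound[of "\<lambda>j. - kth_largest (n div 2) (offdiag_col B j)"] by simp
  ultimately show ?thesis
    by (intro conjI impI min.boundedI shifted_bound)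
qed

end
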